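(* Let $m\ge 1$ and let $s$ be a spline of degree $m$ with knots $\alpha_0<\alpha_1<\dots<\alpha_n$. Then there exists a compactly supported spline $\bar s$ of degree $m$ such that $\bar s$ coincides with $s$ on $[\alpha_0,\alpha_n]$ and the set of knots of $\bar s$ is contained in $$\{\alpha_0-m,\alpha_0-m+1,\dots,\alpha_0-1\}\cup\{\alpha_0,\alpha_1,\dots,\alpha_n\}\cup\{\alpha_n+1,\dots,\alpha_n+m\}.$$
   Context: A spline of degree $m$ (with finitely many knots) is a function $s\in C^{m-1}(\mathbb{R},\mathbb{R})$ for which there are finitely many points such that on each interval between consecutive such points, and on the two unbounded complementary intervals, $s$ coincides with a polynomial of degree at most $m$. The knots of $s$ are the points at which $s$ is not $C^\infty$. *)

theory Defs
  imports "HOL-Analysis.Analysis" "HOL-Computational_Algebra.Polynomial"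
begin

definition Ck_on :: "nat \<Rightarrow> (real \<Rightarrow> real) \<Rightarrow> real set \<Rightarrow> bool" where
  "Ck_on k f S \<longleftrightarrow>
     (\<forall>j<k. \<forall>x\<in>S. ((deriv ^^ j) f) differentiable (at x)) \<and>
     continuous_on S ((deriv ^^ k) f)"

definition smooth_at :: "(real \<Rightarrow> real) \<Rightarrow> real \<Rightarrow> bool" where
  "smooth_at f x \<longleftrightarrow> (\<exists>e>0. \<forall>k. Ck_on k f (ball x e))"

definition knots :: "(real \<Rightarrow> real) \<Rightarrow> real set" where
  "knots f = {x. \<not> smooth_at f x}"

text \<open>Spline of degree m (finitely many knots): f is C^(m-1) on the reals and there is a
finite set P of points such that on every interval disjoint from P (the intervals between
consecutive points and the two unbounded ones) f coincides with a polynomial of degree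
at most m.\<close>
definition spline :: "nat \<Rightarrow> (real \<Rightarrow> real) \<Rightarrow> bool" where
  "spline m f \<longleftrightarrow> Ck_on (m - 1) f UNIV \<and>
     (\<exists>P. finite P \<and> (\<forall>U. is_interval U \<and> U \<inter> P = {} \<longrightarrow>
        (\<exists>p :: real poly. degree p \<le> m \<and> (\<forall>x\<in>U. f x = poly p x))))"

definition compactly_supported :: "(real \<Rightarrow> real) \<Rightarrow> bool" where
  "compactly_supported f \<longleftrightarrow> compact (closure {x. f x \<noteq> 0})"

end

theory Submission
  imports Defs
begin

text \<open>Only the two unbounded pieces of \<open>s\<close> have to be replaced. Just right of \<open>b = \<alpha>\<^sub>n\<close>, \<open>s\<close>
agrees with a polynomial \<open>p\<close> of degree \<open>\<le> m\<close>. The powers \<open>(t - b - k)\<^sup>m\<close>, \<open>k = 0, \<dots>, m\<close>, span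
these polynomials, so \<open>p = \<Sum>\<^sub>k w\<^sub>k (t - b - k)\<^sup>m\<close>, and \<open>g = p - \<Sum>\<^sub>k w\<^sub>k (t - b - k)\<^sub>+\<^sup>m\<close> is a
\<open>C\<^sup>m\<^sup>-\<^sup>1\<close> spline with knots among \<open>b, b + 1, \<dots>, b + m\<close> that vanishes beyond \<open>b + m\<close>; on
\<open>(b, b + 1)\<close> it differs from \<open>p\<close> only by a multiple of \<open>(t - b)\<^sup>m\<close>. The same construction with
truncated powers at \<open>a, a - 1, \<dots>, a - m\<close> works left of \<open>a = \<alpha>\<^sub>0\<close>. The function equal to \<open>s\<close>
on \<open>[a, b]\<close> and to these tails outside is \<open>C\<^sup>m\<^sup>-\<^sup>1\<close>, because near \<open>[a, b]\<close> it is \<open>s\<close> plus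
multiples of the one-sided powers \<open>(t - a)\<^sup>m\<close> (left of \<open>a\<close>) and \<open>(t - b)\<^sup>m\<close> (right of \<open>b\<close>).\<close>

definition Ck_at :: "nat \<Rightarrow> (real \<Rightarrow> real) \<Rightarrow> real \<Rightarrow> bool" where
  "Ck_at k f x \<longleftrightarrow> (\<forall>j<k. (deriv ^^ j) f differentiable (at x)) \<and> isCont ((deriv ^^ k) f) x"

lemma Ck_on_open_iff: "open S \<Longrightarrow> Ck_on k f S \<longleftrightarrow> (\<forall>x\<in>S. Ck_at k f x)"
  unfolding Ck_on_def Ck_at_def by (auto simp: continuous_on_eq_continuous_at)

lemma Ck_at_cong_ev:
  assumes "eventually (\<lambda>y. f y = g y) (nhds x)"
  shows "Ck_at k f x \<longleftrightarrow> Ck_at k g x"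
proof -
  have "eventually (\<lambda>y. eventually (\<lambda>z. f z = g z) (nhds y)) (nhds x)"
    using assms by (simp add: eventually_eventually)
  hence "eventually (\<lambda>y. (deriv ^^ j) f y = (deriv ^^ j) g y) (nhds x)" for j
    by eventually_elim (rule higher_deriv_cong_ev, simp_all)
  moreover have "(deriv ^^ j) f differentiable (at x) \<longleftrightarrow> (deriv ^^ j) g differentiable (at x)"
    if "eventually (\<lambda>y. (deriv ^^ j) f y = (deriv ^^ j) g y) (nhds x)" for j
  proof -
    have "(deriv ^^ j) f x = (deriv ^^ j) g x" using eventually_nhds_x_imp_x[OF that] .
    thus ?thesis
      using DERIV_cong_ev[OF refl that refl] unfolding real_differentiable_def by metis
  qed
  ultimately show ?thesis
    unfolding Ck_at_def using isCont_cong by blast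
qed

lemma Ck_on_UNIV_locally:
  assumes "\<And>x. \<exists>S g. open S \<and> x \<in> S \<and> Ck_on k g UNIV \<and> (\<forall>y\<in>S. f y = g y)"
  shows "Ck_on k f UNIV"
  unfolding Ck_on_open_iff[OF open_UNIV]
proof
  fix x
  obtain S g where S: "open S" "x \<in> S" "Ck_on k g UNIV" "\<forall>y\<in>S. f y = g y"
    using assms by blast
  have "eventually (\<lambda>y. f y = g y) (nhds x)"
    using S(1,2,4) eventually_nhds by blast
  thus "Ck_at k f x"
    using S(3) Ck_at_cong_ev Ck_on_open_iff[OF open_UNIV] by blast
qed

lemma smooth_at_iff_Ck_at: "smooth_at f x \<longleftrightarrow> (\<exists>e>0. \<forall>k. \<forall>y\<in>ball x e. Ck_at k f y)"
  unfolding smooth_at_def by (simp add: Ck_on_open_iff)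

lemma smooth_at_cong:
  assumes "open S" "x \<in> S" "\<forall>y\<in>S. f y = g y" "smooth_at g x"
  shows "smooth_at f x"
proof -
  obtain e where e: "e > 0" "\<forall>k. \<forall>y\<in>ball x e. Ck_at k g y"
    using assms(4) unfolding smooth_at_iff_Ck_at by blast
  obtain r where r: "r > 0" "ball x r \<subseteq> S"
    using assms(1,2) open_contains_ball by blast
  have "Ck_at k f y" if "y \<in> ball x (min e r)" for k y
  proof -
    have "eventually (\<lambda>z. f z = g z) (nhds y)"
      using assms(1,3) that r(2) unfolding eventually_nhds by (intro exI[of _ S]) auto
    thus ?thesis using e(2) that Ck_at_cong_ev by auto
  qed
  thus ?thesis unfolding smooth_at_iff_Ck_at using e(1) r(1) by (intro exI[of _ "min e r"]) auto
qed

lemma higher_deriv_poly: "(deriv ^^ j) (poly p) = poly ((pderiv ^^ j) p)"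
  by (induction j) (simp_all add: ext DERIV_imp_deriv)

lemma Ck_on_poly: "Ck_on k (poly p) S"
  unfolding Ck_on_def higher_deriv_poly
  by (auto intro!: continuous_intros simp: real_differentiable_def intro: poly_DERIV)

lemma smooth_at_poly: "smooth_at (poly p) x"
  unfolding smooth_at_def using Ck_on_poly zero_less_one by blast

lemma higher_deriv_add:
  assumes "Ck_on k f UNIV" "Ck_on k g UNIV" "j \<le> k"
  shows "(deriv ^^ j) (\<lambda>x. f x + g x) = (\<lambda>x. (deriv ^^ j) f x + (deriv ^^ j) g x)"
  using assms(3)
proof (induction j)
  case (Suc j)
  hence "(deriv ^^ j) f field_differentiable at x" "(deriv ^^ j) g field_differentiable at x" for x
    using assms(1,2) unfolding Ck_on_def
    by (auto simp flip: DERIV_deriv_iff_field_differentiable DERIV_deriv_iff_real_differentiable)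
  thus ?case using Suc by auto
qed simp

lemma higher_deriv_cmult:
  assumes "Ck_on k f UNIV" "j \<le> k"
  shows "(deriv ^^ j) (\<lambda>x. c * f x) = (\<lambda>x. c * (deriv ^^ j) f x)"
  using assms(2)
proof (induction j)
  case (Suc j)
  hence "(deriv ^^ j) f field_differentiable at x" for x
    using assms(1) unfolding Ck_on_def
    by (auto simp flip: DERIV_deriv_iff_field_differentiable DERIV_deriv_iff_real_differentiable)
  thus ?case using Suc by (auto simp: deriv_cmult)
qed simp

lemma Ck_on_add:
  assumes "Ck_on k f UNIV" "Ck_on k g UNIV"
  shows "Ck_on k (\<lambda>x. f x + g x) UNIV"
  using assms unfolding Ck_on_def higher_deriv_add[OF assms order.refl]
  by (auto simp: higher_deriv_add[OF assms] intro: continuous_on_add)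

lemma Ck_on_cmult:
  assumes "Ck_on k f UNIV"
  shows "Ck_on k (\<lambda>x. c * f x) UNIV"
  using assms unfolding Ck_on_def higher_deriv_cmult[OF assms order.refl]
  by (auto simp: higher_deriv_cmult[OF assms] intro: continuous_on_mult continuous_on_const)

lemma Ck_on_sum:
  assumes "\<And>i. i \<in> A \<Longrightarrow> Ck_on k (f i) UNIV"
  shows "Ck_on k (\<lambda>x. \<Sum>i\<in>A. f i x) UNIV"
  using assms
proof (induction A rule: infinite_finite_induct)
  case (insert a A)
  then show ?case using Ck_on_add[of k "f a" "\<lambda>x. \<Sum>i\<in>A. f i x"] by simp
qed (simp_all add: Ck_on_poly[of k 0, unfolded poly_0])

section \<open>Truncated powers\<close>

definition trunc_power :: "real \<Rightarrow> nat \<Rightarrow> real \<Rightarrow> real" where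
  "trunc_power c e y = (max 0 (y - c)) ^ e"

lemma trunc_power_le: "y \<le> c \<Longrightarrow> e \<ge> 1 \<Longrightarrow> trunc_power c e y = 0"
  by (simp add: trunc_power_def)

lemma trunc_power_ge: "y \<ge> c \<Longrightarrow> trunc_power c e y = (y - c) ^ e"
  by (simp add: trunc_power_def)

lemma has_real_derivative_trunc_power:
  assumes "e \<ge> 2"
  shows "(trunc_power c e has_real_derivative (e * trunc_power c (e - 1) y)) (at y)"
proof (cases y c rule: linorder_cases)
  case less
  have "eventually (\<lambda>z. trunc_power c e z = 0) (nhds y)"
    using less assms unfolding eventually_nhds
    by (intro exI[of _ "{..<c}"]) (auto simp: trunc_power_le)
  hence "(trunc_power c e has_real_derivative 0) (at y)"
    using DERIV_cong_ev[OF refl _ refl, of "trunc_power c e" "\<lambda>_. 0"] by simp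
  thus ?thesis
    using less assms by (simp add: trunc_power_le)
next
  case equal
  \<comment> \<open>Caratheodory: near \<open>c\<close> the function is \<open>(z - c)\<close> times the continuous \<open>trunc_power c (e - 1)\<close>.\<close>
  have "trunc_power c e z - trunc_power c e c = trunc_power c (e - 1) z * (z - c)" for z
    using assms by (cases "z \<le> c") (simp_all add: trunc_power_def power_eq_if)
  moreover have "isCont (trunc_power c (e - 1)) c"
    unfolding trunc_power_def by (intro continuous_intros)
  ultimately show ?thesis
    using equal assms by (auto simp: CARAT_DERIV trunc_power_le)
next
  case greater
  have "eventually (\<lambda>z. trunc_power c e z = (z - c) ^ e) (nhds y)"
    using greater unfolding eventually_nhds
    by (intro exI[of _ "{c<..}"]) (auto simp: trunc_power_ge)
  moreover have "((\<lambda>z. (z - c) ^ e) has_real_derivative e * (y - c) ^ (e - 1)) (at y)"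
    by (auto intro!: derivative_eq_intros)
  ultimately show ?thesis
    using greater DERIV_cong_ev[OF refl _ refl, of "trunc_power c e" "\<lambda>z. (z - c) ^ e"]
    by (simp add: trunc_power_ge)
qed

lemma higher_deriv_trunc_power:
  assumes "j < e"
  shows "\<exists>\<kappa>. (deriv ^^ j) (trunc_power c e) = (\<lambda>y. \<kappa> * trunc_power c (e - j) y)"
  using assms
proof (induction j)
  case 0
  show ?case by (intro exI[of _ 1]) simp
next
  case (Suc j)
  then obtain \<kappa> where \<kappa>: "(deriv ^^ j) (trunc_power c e) = (\<lambda>y. \<kappa> * trunc_power c (e - j) y)"
    by auto
  have "deriv (\<lambda>y. \<kappa> * trunc_power c (e - j) y) y = \<kappa> * (e - j) * trunc_power c (e - Suc j) y" for y
    using has_real_derivative_trunc_power[of "e - j" c y] Suc.prems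
    by (intro DERIV_imp_deriv) (auto intro!: derivative_eq_intros simp: Suc_diff_Suc)
  thus ?case using \<kappa> by auto
qed

lemma Ck_on_trunc_power:
  assumes "e \<ge> 1"
  shows "Ck_on (e - 1) (trunc_power c e) UNIV"
  unfolding Ck_on_def
proof (intro conjI allI impI ballI)
  fix j x assume "j < e - 1"
  then obtain \<kappa> where "(deriv ^^ j) (trunc_power c e) = (\<lambda>y. \<kappa> * trunc_power c (e - j) y)"
    using higher_deriv_trunc_power by fastforce
  moreover have "e - j \<ge> 2"
    using \<open>j < e - 1\<close> by arith
  hence "trunc_power c (e - j) differentiable at x"
    using has_real_derivative_trunc_power real_differentiable_def by blast
  ultimately show "(deriv ^^ j) (trunc_power c e) differentiable at x"
    by (simp add: differentiable_mult)
next
  obtain \<kappa> where "(deriv ^^ (e - 1)) (trunc_power c e) = (\<lambda>y. \<kappa> * trunc_power c (e - (e - 1)) y)"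
    using higher_deriv_trunc_power[of "e - 1" e c] assms by auto
  thus "continuous_on UNIV ((deriv ^^ (e - 1)) (trunc_power c e))"
    unfolding trunc_power_def by (auto intro!: continuous_intros)
qed

section \<open>Shifted powers span the polynomials\<close>

lemma pcompose_monom_eq_smult_power: "monom c i \<circ>\<^sub>p q = smult c (q ^ i)"
  by (induction i) (auto simp: monom_Suc pcompose_pCons monom_0)

lemma coeff_pcompose_shift_below_degree:
  fixes E :: "real poly"
  assumes "degree E = Suc d"
  shows "coeff (E \<circ>\<^sub>p [:-h, 1:]) d = coeff E d - real (Suc d) * h * coeff E (Suc d)"
proof -
  let ?L = "[:-h, 1:] :: real poly"
  have "E \<circ>\<^sub>p ?L = (\<Sum>i\<le>degree E. monom (coeff E i) i) \<circ>\<^sub>p ?L"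
    by (simp only: poly_as_sum_of_monoms)
  hence "E \<circ>\<^sub>p ?L = (\<Sum>i\<le>Suc d. smult (coeff E i) (?L ^ i))"
    by (simp only: assms pcompose_sum pcompose_monom_eq_smult_power)
  hence "coeff (E \<circ>\<^sub>p ?L) d = (\<Sum>i\<le>Suc d. coeff E i * coeff (?L ^ i) d)"
    by (simp add: coeff_sum)
  also have "\<dots> = (\<Sum>i<d. coeff E i * coeff (?L ^ i) d) + coeff E d * coeff (?L ^ d) d
       + coeff E (Suc d) * coeff (?L ^ Suc d) d"
    by (simp add: lessThan_Suc_atMost[symmetric])
  also have "(\<Sum>i<d. coeff E i * coeff (?L ^ i) d) = 0"
    by (intro sum.neutral ballI) (simp add: coeff_eq_0 degree_linear_power)
  also have "coeff (?L ^ d) d = 1"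
    by (simp add: coeff_linear_power)
  also have "coeff (?L ^ Suc d) d = real (Suc d) * (- h)"
    using coeff_linear_poly_power[of d "Suc d" "-h" 1] by simp
  finally show ?thesis by simp
qed

lemma degree_forward_difference:
  fixes E :: "real poly"
  assumes "degree E = Suc d" "h \<noteq> 0"
  shows "degree (E - E \<circ>\<^sub>p [:-h, 1:]) = d" "E - E \<circ>\<^sub>p [:-h, 1:] \<noteq> 0"
proof -
  let ?G = "E - E \<circ>\<^sub>p [:-h, 1:]"
  have degree_shift: "degree (E \<circ>\<^sub>p [:-h, 1:]) = Suc d"
    using assms by (simp add: degree_pcompose)
  have "coeff (E \<circ>\<^sub>p [:-h, 1:]) (Suc d) = coeff E (Suc d)"
    using lead_coeff_comp[of "[:-h, 1:]" E] assms degree_shift by simp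
  hence "degree ?G \<le> d"
    using assms degree_shift
    by (intro degree_le allI impI) (metis Suc_lessI coeff_diff coeff_eq_0 diff_self)
  moreover have "coeff E (Suc d) \<noteq> 0"
    using assms(1) by (metis leading_coeff_0_iff nat.distinct(1) degree_0)
  hence "coeff ?G d \<noteq> 0"
    using coeff_pcompose_shift_below_degree[OF assms(1), of h] assms(2) by simp
  ultimately show "degree ?G = d" "?G \<noteq> 0"
    using le_degree[of ?G d] by auto
qed

lemma degree_cancel_leading_coeff:
  fixes E q :: "real poly"
  assumes "degree E = Suc d" "degree q \<le> Suc d"
  shows "degree (q - smult (coeff q (Suc d) / coeff E (Suc d)) E) \<le> d"
proof (rule degree_le, intro allI impI)
  fix i assume "i > d"
  show "coeff (q - smult (coeff q (Suc d) / coeff E (Suc d)) E) i = 0"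
  proof (cases "i = Suc d")
    case True
    have "coeff E (Suc d) \<noteq> 0"
      using assms(1) by (metis leading_coeff_0_iff nat.distinct(1) degree_0)
    thus ?thesis using True by simp
  next
    case False
    thus ?thesis using assms \<open>i > d\<close> by (simp add: coeff_eq_0)
  qed
qed

lemma combination_of_differences:
  fixes c :: "'a :: comm_ring"
  shows "\<exists>w. \<forall>g. c * g 0 + (\<Sum>k\<le>d. e k * (g k - g (Suc k))) = (\<Sum>k\<le>Suc d. w k * g k)"
proof -
  define w where "w k = (if k = 0 then c else 0) + (if k \<le> d then e k else 0)
      - (if k \<ge> 1 then e (k - 1) else 0)" for k
  have "(\<Sum>k\<le>Suc d. w k * g k) = c * g 0 + (\<Sum>k\<le>d. e k * (g k - g (Suc k)))" for g
  proof -
    have "(\<Sum>k\<le>Suc d. w k * g k) = (\<Sum>k\<le>Suc d. (if k = 0 then c else 0) * g k)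
        + (\<Sum>k\<le>Suc d. (if k \<le> d then e k else 0) * g k)
        - (\<Sum>k\<le>Suc d. (if k \<ge> 1 then e (k - 1) else 0) * g k)"
      by (simp add: w_def algebra_simps sum.distrib sum_subtractf)
    also have "(\<Sum>k\<le>Suc d. (if k = 0 then c else 0) * g k) = c * g 0"
      by (subst sum.atMost_Suc_shift) simp
    also have "(\<Sum>k\<le>Suc d. (if k \<le> d then e k else 0) * g k) = (\<Sum>k\<le>d. e k * g k)"
      by (simp add: atMost_Suc)
    also have "(\<Sum>k\<le>Suc d. (if k \<ge> 1 then e (k - 1) else 0) * g k) = (\<Sum>k\<le>d. e k * g (Suc k))"
      by (subst sum.atMost_Suc_shift) simp
    finally show ?thesis by (simp add: algebra_simps sum_subtractf)
  qed
  thus ?thesis by metis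
qed

lemma poly_in_span_of_shifts:
  fixes E q :: "real poly"
  assumes "degree E = d" "E \<noteq> 0" "h \<noteq> 0" "degree q \<le> d"
  shows "\<exists>w. \<forall>t. poly q t = (\<Sum>k\<le>d. w k * poly E (t - b - real k * h))"
  using assms
proof (induction d arbitrary: E q b)
  case 0
  then obtain e where "E = [:e:]" "e \<noteq> 0"
    by (metis degree_0_id pCons_0_0)
  moreover obtain c where "q = [:c:]"
    using "0.prems"(4) by (metis degree_0_id le_zero_eq)
  ultimately have "\<forall>t. poly q t = (\<Sum>k\<le>0. c / e * poly E (t - b - real k * h))"
    by simp
  thus ?case by (rule exI[where x = "\<lambda>_. c / e"])
next
  case (Suc d)
  \<comment> \<open>Peel off the leading coefficient with a multiple of \<open>E(t - b)\<close>; the rest has degree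
    \<open>\<le> d\<close> and lies in the span of the shifts of the forward difference \<open>F(t) = E(t) - E(t - h)\<close>.\<close>
  define F where "F = E - E \<circ>\<^sub>p [:-h, 1:]"
  have "degree F = d" "F \<noteq> 0"
    using degree_forward_difference[OF Suc.prems(1,3)] by (simp_all add: F_def)
  define Eb where "Eb = E \<circ>\<^sub>p [:-b, 1:]"
  define c where "c = coeff q (Suc d) / coeff Eb (Suc d)"
  have "degree Eb = Suc d"
    using Suc.prems(1) by (simp add: Eb_def degree_pcompose)
  hence "degree (q - smult c Eb) \<le> d"
    unfolding c_def using Suc.prems(4) by (rule degree_cancel_leading_coeff)
  then obtain e where e: "\<forall>t. poly (q - smult c Eb) t = (\<Sum>k\<le>d. e k * poly F (t - b - real k * h))"
    using Suc.IH[OF \<open>degree F = d\<close> \<open>F \<noteq> 0\<close> Suc.prems(3)] by blast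
  obtain w where "\<forall>g. c * g 0 + (\<Sum>k\<le>d. e k * (g k - g (Suc k))) = (\<Sum>k\<le>Suc d. w k * g k)"
    using combination_of_differences by blast
  from this[rule_format, of "\<lambda>k. poly E (t - b - real k * h)" for t]
  have "poly q t = (\<Sum>k\<le>Suc d. w k * poly E (t - b - real k * h))" for t
    using e[rule_format, of t] by (simp add: F_def Eb_def poly_pcompose algebra_simps)
  thus ?case by blast
qed

lemma poly_eq_sum_shifted_powers:
  fixes q :: "real poly"
  assumes "degree q \<le> m" "h \<noteq> 0"
  shows "\<exists>w. \<forall>t. poly q t = (\<Sum>k\<le>m. w k * (t - (b + real k * h)) ^ m)"
  using poly_in_span_of_shifts[of "monom 1 m" m h q b] assms
  by (simp add: degree_monom_eq poly_monom diff_diff_eq)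

definition poly_on :: "nat \<Rightarrow> real set \<Rightarrow> (real \<Rightarrow> real) \<Rightarrow> bool" where
  "poly_on m U f \<longleftrightarrow> (\<exists>p :: real poly. degree p \<le> m \<and> (\<forall>x\<in>U. f x = poly p x))"

definition piecewise_poly :: "nat \<Rightarrow> real set \<Rightarrow> (real \<Rightarrow> real) \<Rightarrow> bool" where
  "piecewise_poly m A f \<longleftrightarrow> (\<forall>U. is_interval U \<and> U \<inter> A = {} \<longrightarrow> poly_on m U f)"

lemma spline_iff_piecewise_poly:
  "spline m f \<longleftrightarrow> Ck_on (m - 1) f UNIV \<and> (\<exists>A. finite A \<and> piecewise_poly m A f)"
  unfolding spline_def piecewise_poly_def poly_on_def ..

lemma poly_on_poly: "degree p \<le> m \<Longrightarrow> poly_on m U (poly p)"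
  unfolding poly_on_def by blast

lemma poly_on_cong: "poly_on m U g \<Longrightarrow> \<forall>x\<in>U. f x = g x \<Longrightarrow> poly_on m U f"
  unfolding poly_on_def by auto

lemma poly_on_add:
  assumes "poly_on m U f" "poly_on m U g"
  shows "poly_on m U (\<lambda>x. f x + g x)"
proof -
  obtain p q where "degree p \<le> m" "\<forall>x\<in>U. f x = poly p x" "degree q \<le> m" "\<forall>x\<in>U. g x = poly q x"
    using assms unfolding poly_on_def by blast
  thus ?thesis
    unfolding poly_on_def by (intro exI[of _ "p + q"]) (auto intro: degree_add_le)
qed

lemma poly_on_cmult: "poly_on m U f \<Longrightarrow> poly_on m U (\<lambda>x. c * f x)"
  unfolding poly_on_def by (metis degree_smult_le order.trans poly_smult)

lemma poly_on_sum:
  assumes "\<And>i. i \<in> K \<Longrightarrow> poly_on m U (f i)"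
  shows "poly_on m U (\<lambda>x. \<Sum>i\<in>K. f i x)"
  using assms
proof (induction K rule: infinite_finite_induct)
  case (insert a K)
  then show ?case using poly_on_add[of m U "f a" "\<lambda>x. \<Sum>i\<in>K. f i x"] by simp
qed (simp_all add: poly_on_poly[of 0, unfolded poly_0])

lemma is_interval_avoiding_point:
  assumes "is_interval (U :: real set)" "c \<notin> U"
  shows "U \<subseteq> {..<c} \<or> U \<subseteq> {c<..}"
proof (rule ccontr)
  assume "\<not> ?thesis"
  then obtain y z where "y \<in> U" "z \<in> U" "y \<ge> c" "z \<le> c"
    by (auto simp: subset_iff not_less)
  thus False
    using assms unfolding is_interval_1 by (metis linorder_le_cases)
qed

lemma poly_on_trunc_power:
  assumes "is_interval U" "c \<notin> U"
  shows "poly_on m U (trunc_power c m)"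
proof (cases "U \<subseteq> {..<c}")
  case True
  hence "\<forall>y\<in>U. trunc_power c m y = poly [:0 ^ m:] y"
    by (auto simp: trunc_power_def)
  thus ?thesis using poly_on_cong poly_on_poly by (metis degree_pCons_0 le0)
next
  case False
  hence "\<forall>y\<in>U. trunc_power c m y = poly ([:-c, 1:] ^ m) y"
    using is_interval_avoiding_point[OF assms] by (auto simp: trunc_power_ge poly_power)
  thus ?thesis using poly_on_cong poly_on_poly by (metis degree_linear_power order.refl)
qed

lemma smooth_at_poly_on:
  assumes "open S" "x \<in> S" "poly_on m S f"
  shows "smooth_at f x"
  using assms smooth_at_cong smooth_at_poly unfolding poly_on_def by metis

lemma knots_subset_breaks:
  assumes "finite A" "piecewise_poly m A f"
  shows "knots f \<subseteq> A"
proof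
  fix x assume "x \<in> knots f"
  show "x \<in> A"
  proof (rule ccontr)
    assume "x \<notin> A"
    then obtain r where "r > 0" "ball x r \<subseteq> - A"
      using assms(1) finite_imp_closed open_contains_ball by (metis ComplI closed_open)
    hence "poly_on m (ball x r) f"
      using assms(2) unfolding piecewise_poly_def by (auto simp: is_interval_convex_1)
    hence "smooth_at f x" using smooth_at_poly_on[of "ball x r" x] \<open>r > 0\<close> by simp
    thus False using \<open>x \<in> knots f\<close> unfolding knots_def by simp
  qed
qed

lemma piecewise_poly_one_sided:
  assumes "finite A" "piecewise_poly m A f"
  obtains \<delta> where "\<delta> > 0" "poly_on m {x - \<delta><..<x} f" "poly_on m {x<..<x + \<delta>} f"
proof -
  obtain \<delta> where \<delta>: "\<delta> > 0" "\<forall>y\<in>A. y \<noteq> x \<longrightarrow> \<delta> \<le> dist x y"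
    using finite_set_avoid[OF assms(1)] by blast
  hence "{x - \<delta><..<x} \<inter> A = {}" "{x<..<x + \<delta>} \<inter> A = {}"
    by (fastforce simp: dist_real_def)+
  thus ?thesis using that \<delta>(1) assms(2) unfolding piecewise_poly_def by auto
qed

section \<open>Compactly supported tails and gluing\<close>

lemma Ck_on_trunc_power_sum:
  assumes "m \<ge> 1"
  shows "Ck_on (m - 1) (\<lambda>y. poly q y + (\<Sum>k\<in>K. w k * trunc_power (c k) m y)) UNIV"
  using assms by (intro Ck_on_add Ck_on_poly Ck_on_sum Ck_on_cmult Ck_on_trunc_power)

lemma piecewise_poly_trunc_power_sum:
  assumes "degree q \<le> m"
  shows "piecewise_poly m (c ` K) (\<lambda>y. poly q y + (\<Sum>k\<in>K. w k * trunc_power (c k) m y))"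
  unfolding piecewise_poly_def
  using assms by (auto intro!: poly_on_add poly_on_poly poly_on_sum poly_on_cmult poly_on_trunc_power)

lemma right_tail:
  fixes p :: "real poly"
  assumes "m \<ge> 1" "degree p \<le> m"
  obtains g d where "Ck_on (m - 1) g UNIV" "piecewise_poly m ((\<lambda>k. b + real k) ` {..m}) g"
    "\<And>y. y > b + m \<Longrightarrow> g y = 0"
    "\<And>y. y \<in> {b<..<b + 1} \<Longrightarrow> g y = poly p y + d * (y - b) ^ m"
proof -
  obtain w where w: "\<And>t. poly p t = (\<Sum>k\<le>m. w k * (t - (b + real k)) ^ m)"
    using poly_eq_sum_shifted_powers[OF assms(2), of 1 b] by auto
  define g where "g y = poly p y + (\<Sum>k\<le>m. - w k * trunc_power (b + real k) m y)" for y
  have "g y = 0" if "y > b + m" for y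
  proof -
    have "trunc_power (b + real k) m y = (y - (b + real k)) ^ m" if "k \<le> m" for k
      using that \<open>y > b + m\<close> by (intro trunc_power_ge) simp
    thus ?thesis by (simp add: g_def w sum_negf)
  qed
  moreover have "g y = poly p y + - w 0 * (y - b) ^ m" if "y \<in> {b<..<b + 1}" for y
  proof -
    have "- w k * trunc_power (b + real k) m y = (if k = 0 then - w 0 * (y - b) ^ m else 0)" for k
      using that assms(1) by (auto simp: trunc_power_ge trunc_power_le)
    thus ?thesis by (simp add: g_def)
  qed
  moreover have "Ck_on (m - 1) g UNIV"
    unfolding g_def[abs_def] by (rule Ck_on_trunc_power_sum[OF assms(1)])
  moreover have "piecewise_poly m ((\<lambda>k. b + real k) ` {..m}) g"
    unfolding g_def[abs_def] by (rule piecewise_poly_trunc_power_sum[OF assms(2)])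
  ultimately show thesis
    using that[of g "- w 0"] by blast
qed

lemma left_tail:
  fixes p :: "real poly"
  assumes "m \<ge> 1" "degree p \<le> m"
  obtains g d where "Ck_on (m - 1) g UNIV" "piecewise_poly m ((\<lambda>k. a - real k) ` {..m}) g"
    "\<And>y. y < a - m \<Longrightarrow> g y = 0"
    "\<And>y. y \<in> {a - 1<..<a} \<Longrightarrow> g y = poly p y + d * (y - a) ^ m"
proof -
  \<comment> \<open>With \<open>p = \<Sum>\<^sub>k w\<^sub>k (t - a + k)\<^sup>m\<close>, truncating every power gives \<open>0\<close> left of \<open>a - m\<close>
    and changes only the term \<open>k = 0\<close> on \<open>(a - 1, a)\<close>.\<close>
  obtain w where w: "\<And>t. poly p t = (\<Sum>k\<le>m. w k * (t - (a - real k)) ^ m)"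
    using poly_eq_sum_shifted_powers[OF assms(2), of "-1" a] by auto
  define g where "g y = poly 0 y + (\<Sum>k\<le>m. w k * trunc_power (a - real k) m y)" for y
  have "g y = 0" if "y < a - m" for y
  proof -
    have "trunc_power (a - real k) m y = 0" if "k \<le> m" for k
      using that \<open>y < a - m\<close> assms(1) by (intro trunc_power_le) auto
    thus ?thesis by (simp add: g_def)
  qed
  moreover have "g y = poly p y + - w 0 * (y - a) ^ m" if "y \<in> {a - 1<..<a}" for y
  proof -
    have "w k * trunc_power (a - real k) m y
        = w k * (y - (a - real k)) ^ m - (if k = 0 then w 0 * (y - a) ^ m else 0)" for k
      using that assms(1) by (auto simp: trunc_power_ge trunc_power_le)
    hence "g y = (\<Sum>k\<le>m. w k * (y - (a - real k)) ^ m) - w 0 * (y - a) ^ m"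
      by (simp add: g_def sum_subtractf)
    thus ?thesis by (simp add: w[symmetric])
  qed
  moreover have "Ck_on (m - 1) g UNIV"
    unfolding g_def[abs_def] by (rule Ck_on_trunc_power_sum[OF assms(1)])
  moreover have "piecewise_poly m ((\<lambda>k. a - real k) ` {..m}) g"
    unfolding g_def[abs_def] by (rule piecewise_poly_trunc_power_sum) simp
  ultimately show thesis
    using that[of g "- w 0"] by blast
qed

lemma Ck_on_glue:
  assumes "\<delta> > 0" "\<forall>y<a. f y = gL y" "\<forall>y\<in>{a - \<delta><..<b + \<delta>}. f y = g y" "\<forall>y>b. f y = gR y"
    and "Ck_on k gL UNIV" "Ck_on k g UNIV" "Ck_on k gR UNIV"
  shows "Ck_on k f UNIV"
proof (rule Ck_on_UNIV_locally)
  fix x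
  consider "x < a" | "x > b" | "x \<in> {a - \<delta><..<b + \<delta>}"
    using assms(1) by fastforce
  then show "\<exists>S g. open S \<and> x \<in> S \<and> Ck_on k g UNIV \<and> (\<forall>y\<in>S. f y = g y)"
  proof cases
    case 1
    thus ?thesis using assms(2,5) by (intro exI[of _ "{..<a}"] exI[of _ gL]) auto
  next
    case 2
    thus ?thesis using assms(4,7) by (intro exI[of _ "{b<..}"] exI[of _ gR]) auto
  next
    case 3
    thus ?thesis using assms(3,6) by (intro exI[of _ "{a - \<delta><..<b + \<delta>}"] exI[of _ g]) auto
  qed
qed

lemma piecewise_poly_glue:
  assumes "\<forall>y<a. f y = gL y" "\<forall>y\<in>{a..b}. f y = g y" "\<forall>y>b. f y = gR y"
    and "piecewise_poly m PL gL" "piecewise_poly m P g" "piecewise_poly m PR gR"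
  shows "piecewise_poly m (PL \<union> P \<union> PR \<union> {a, b}) f"
  unfolding piecewise_poly_def
proof (intro allI impI)
  fix U assume U: "is_interval U \<and> U \<inter> (PL \<union> P \<union> PR \<union> {a, b}) = {}"
  hence "U \<subseteq> {..<a} \<or> U \<subseteq> {a<..}" "U \<subseteq> {..<b} \<or> U \<subseteq> {b<..}"
    using is_interval_avoiding_point by auto
  then consider "U \<subseteq> {..<a}" | "U \<subseteq> {b<..}" | "U \<subseteq> {a..b}"
    by fastforce
  then show "poly_on m U f"
  proof cases
    case 1
    thus ?thesis using U assms(1,4) poly_on_cong unfolding piecewise_poly_def by blast
  next
    case 2
    thus ?thesis using U assms(3,6) poly_on_cong unfolding piecewise_poly_def by blast
  next
    case 3
    thus ?thesis using U assms(2,5) poly_on_cong unfolding piecewise_poly_def by blast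
  qed
qed

lemma knots_glue:
  assumes "\<forall>y<a. f y = gL y" "\<forall>y\<in>{a..b}. f y = g y" "\<forall>y>b. f y = gR y"
  shows "knots f \<subseteq> knots gL \<inter> {..<a} \<union> knots g \<inter> {a<..<b} \<union> knots gR \<inter> {b<..} \<union> {a, b}"
proof (rule subsetI, rule ccontr)
  fix x assume "x \<in> knots f" "x \<notin> knots gL \<inter> {..<a} \<union> knots g \<inter> {a<..<b} \<union> knots gR \<inter> {b<..} \<union> {a, b}"
  then consider "x < a" "smooth_at gL x" | "x \<in> {a<..<b}" "smooth_at g x" | "x > b" "smooth_at gR x"
    unfolding knots_def by fastforce
  hence "smooth_at f x"
  proof cases
    case 1
    thus ?thesis using assms(1) by (intro smooth_at_cong[of "{..<a}" x f gL]) auto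
  next
    case 2
    thus ?thesis using assms(2) by (intro smooth_at_cong[of "{a<..<b}" x f g]) auto
  next
    case 3
    thus ?thesis using assms(3) by (intro smooth_at_cong[of "{b<..}" x f gR]) auto
  qed
  thus False using \<open>x \<in> knots f\<close> unfolding knots_def by simp
qed

lemma compactly_supported_if_vanishes_outside:
  assumes "\<And>y. y < c \<Longrightarrow> f y = 0" "\<And>y. y > d \<Longrightarrow> f y = 0"
  shows "compactly_supported f"
proof -
  have "{y. f y \<noteq> 0} \<subseteq> {c..d}"
    using assms by (force simp: not_less[symmetric])
  hence "closure {y. f y \<noteq> 0} \<subseteq> {c..d}"
    by (intro closure_minimal) auto
  thus ?thesis
    unfolding compactly_supported_def
    using bounded_subset compact_eq_bounded_closed by blast
qed

lemma spline_one_sided_polys: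
  assumes "spline m s"
  obtains \<delta> pL pR where "\<delta> > 0" "degree pL \<le> m" "degree pR \<le> m"
    "\<forall>y\<in>{x - \<delta><..<x}. s y = poly pL y" "\<forall>y\<in>{x<..<x + \<delta>}. s y = poly pR y"
proof -
  obtain P where "finite P" "piecewise_poly m P s"
    using assms unfolding spline_iff_piecewise_poly by blast
  then obtain \<delta> where "\<delta> > 0" "poly_on m {x - \<delta><..<x} s" "poly_on m {x<..<x + \<delta>} s"
    using piecewise_poly_one_sided by blast
  thus thesis using that unfolding poly_on_def by blast
qed

lemma Ck_on_glue_one_sided_powers:
  assumes "m \<ge> 1" "Ck_on (m - 1) s UNIV" "Ck_on (m - 1) gL UNIV" "Ck_on (m - 1) gR UNIV"
    and "\<delta> > 0" "a \<le> b"
    and "\<forall>y<a. f y = gL y" "\<forall>y\<in>{a..b}. f y = s y" "\<forall>y>b. f y = gR y"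
    and "\<forall>y\<in>{a - \<delta><..<a}. gL y = s y + dL * (y - a) ^ m"
    and "\<forall>y\<in>{b<..<b + \<delta>}. gR y = s y + dR * (y - b) ^ m"
  shows "Ck_on (m - 1) f UNIV"
proof -
  \<comment> \<open>On \<open>(a - \<delta>, b + \<delta>)\<close>, \<open>f\<close> agrees with \<open>s\<close> plus \<open>dL (y - a)\<^sup>m\<close> left of \<open>a\<close> and \<open>dR (y - b)\<^sup>m\<close> right of \<open>b\<close>.\<close>
  define \<Phi> where "\<Phi> y = s y + dL * poly ([:-a, 1:] ^ m) y + - dL * trunc_power a m y + dR * trunc_power b m y"
    for y
  have "Ck_on (m - 1) \<Phi> UNIV"
    unfolding \<Phi>_def[abs_def] using assms(1,2)
    by (intro Ck_on_add Ck_on_cmult Ck_on_poly Ck_on_trunc_power)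
  moreover have "f y = \<Phi> y" if y: "y \<in> {a - \<delta><..<b + \<delta>}" for y
  proof -
    consider "y < a" | "y \<in> {a..b}" | "y > b" by fastforce
    then show ?thesis
    proof cases
      case 1
      thus ?thesis using y assms by (auto simp: \<Phi>_def trunc_power_le poly_power)
    next
      case 2
      thus ?thesis using assms by (auto simp: \<Phi>_def trunc_power_le trunc_power_ge poly_power)
    next
      case 3
      thus ?thesis using y assms by (auto simp: \<Phi>_def trunc_power_le trunc_power_ge poly_power)
    qed
  qed
  ultimately show ?thesis
    using Ck_on_glue[OF assms(5,7) _ assms(9,3) _ assms(4)] by blast
qed

lemma knots_glue_tails:
  assumes "\<forall>y<a. f y = gL y" "\<forall>y\<in>{a..b}. f y = s y" "\<forall>y>b. f y = gR y"
    and "piecewise_poly m ((\<lambda>k. a - real k) ` {..m}) gL"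
    and "piecewise_poly m ((\<lambda>k. b + real k) ` {..m}) gR"
  shows "knots f \<subseteq> {a - real k | k. k \<in> {1..m}} \<union> (knots s \<inter> {a<..<b} \<union> {a, b})
    \<union> {b + real k | k. k \<in> {1..m}}"
proof -
  have "knots gL \<subseteq> (\<lambda>k. a - real k) ` {..m}"
    using knots_subset_breaks assms(4) by blast
  also have "\<dots> \<subseteq> {a - real k | k. k \<in> {1..m}} \<union> {a}"
    by (auto simp: image_iff)
  finally have left: "knots gL \<subseteq> {a - real k | k. k \<in> {1..m}} \<union> {a}" .
  have "knots gR \<subseteq> (\<lambda>k. b + real k) ` {..m}"
    using knots_subset_breaks assms(5) by blast
  also have "\<dots> \<subseteq> {b + real k | k. k \<in> {1..m}} \<union> {b}"
    by (auto simp: image_iff)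
  finally show ?thesis
    using left by (intro order.trans[OF knots_glue[OF assms(1-3)]]) auto
qed

lemma spline_compact_extension:
  assumes "m \<ge> 1" "spline m s" "a \<le> b"
  shows "\<exists>sb. spline m sb \<and> compactly_supported sb \<and> (\<forall>x\<in>{a..b}. sb x = s x) \<and>
    knots sb \<subseteq> {a - real k | k. k \<in> {1..m}} \<union> (knots s \<inter> {a<..<b} \<union> {a, b})
      \<union> {b + real k | k. k \<in> {1..m}}"
proof -
  obtain P where s: "Ck_on (m - 1) s UNIV" "finite P" "piecewise_poly m P s"
    using assms(2) unfolding spline_iff_piecewise_poly by blast
  obtain \<delta>a pL where pL: "\<delta>a > 0" "degree pL \<le> m" "\<forall>y\<in>{a - \<delta>a<..<a}. s y = poly pL y"
    using spline_one_sided_polys[OF assms(2), of a] by metis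
  obtain \<delta>b pR where pR: "\<delta>b > 0" "degree pR \<le> m" "\<forall>y\<in>{b<..<b + \<delta>b}. s y = poly pR y"
    using spline_one_sided_polys[OF assms(2), of b] by metis
  obtain gL dL where gL: "Ck_on (m - 1) gL UNIV" "piecewise_poly m ((\<lambda>k. a - real k) ` {..m}) gL"
    "\<And>y. y < a - m \<Longrightarrow> gL y = 0" "\<And>y. y \<in> {a - 1<..<a} \<Longrightarrow> gL y = poly pL y + dL * (y - a) ^ m"
    using left_tail[OF assms(1) pL(2)] by blast
  obtain gR dR where gR: "Ck_on (m - 1) gR UNIV" "piecewise_poly m ((\<lambda>k. b + real k) ` {..m}) gR"
    "\<And>y. y > b + m \<Longrightarrow> gR y = 0" "\<And>y. y \<in> {b<..<b + 1} \<Longrightarrow> gR y = poly pR y + dR * (y - b) ^ m"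
    using right_tail[OF assms(1) pR(2)] by blast
  define \<delta> where "\<delta> = min 1 (min \<delta>a \<delta>b)"
  have "\<delta> > 0" using pL(1) pR(1) by (simp add: \<delta>_def)
  have near_a: "\<forall>y\<in>{a - \<delta><..<a}. gL y = s y + dL * (y - a) ^ m"
    using pL(3) gL(4) by (auto simp: \<delta>_def)
  have near_b: "\<forall>y\<in>{b<..<b + \<delta>}. gR y = s y + dR * (y - b) ^ m"
    using pR(3) gR(4) by (auto simp: \<delta>_def)
  define sb where "sb y = (if y < a then gL y else if y > b then gR y else s y)" for y
  have pieces: "\<forall>y<a. sb y = gL y" "\<forall>y\<in>{a..b}. sb y = s y" "\<forall>y>b. sb y = gR y"
    using assms(3) by (auto simp: sb_def)
  have "Ck_on (m - 1) sb UNIV"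
    by (rule Ck_on_glue_one_sided_powers[OF assms(1) s(1) gL(1) gR(1) \<open>\<delta> > 0\<close> assms(3) pieces near_a near_b])
  moreover have "\<exists>A. finite A \<and> piecewise_poly m A sb"
    using piecewise_poly_glue[OF pieces gL(2) s(3) gR(2)] s(2)
    by (intro exI[of _ "(\<lambda>k. a - real k) ` {..m} \<union> P \<union> (\<lambda>k. b + real k) ` {..m} \<union> {a, b}"]) simp
  moreover have "compactly_supported sb"
    using pieces gL(3) gR(3) assms(1,3)
    by (intro compactly_supported_if_vanishes_outside[where c = "a - m" and d = "b + m"]) auto
  ultimately show ?thesis
    using pieces(2) knots_glue_tails[OF pieces gL(2) gR(2)]
    unfolding spline_iff_piecewise_poly by blast
qed

theorem mainTheorem5:
  fixes m n :: nat and s :: "real \<Rightarrow> real" and \<alpha> :: "nat \<Rightarrow> real"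
  assumes "m \<ge> 1"
    and "spline m s"
    and "\<forall>i<n. \<alpha> i < \<alpha> (Suc i)"
    and "knots s = \<alpha> ` {0..n}"
  shows "\<exists>sb. spline m sb \<and> compactly_supported sb \<and>
           (\<forall>x\<in>{\<alpha> 0..\<alpha> n}. sb x = s x) \<and>
           knots sb \<subseteq> {\<alpha> 0 - real k | k. k \<in> {1..m}} \<union> \<alpha> ` {0..n}
                       \<union> {\<alpha> n + real k | k. k \<in> {1..m}}"
proof -
  have "\<alpha> 0 \<le> \<alpha> n"
    by (rule lift_Suc_mono_le_ivl[of "{..<n}"]) (use assms(3) in \<open>auto simp: less_imp_le\<close>)
  then obtain sb where "spline m sb" "compactly_supported sb" "\<forall>x\<in>{\<alpha> 0..\<alpha> n}. sb x = s x"
    and knots_sb: "knots sb \<subseteq> {\<alpha> 0 - real k | k. k \<in> {1..m}}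
      \<union> (knots s \<inter> {\<alpha> 0<..<\<alpha> n} \<union> {\<alpha> 0, \<alpha> n}) \<union> {\<alpha> n + real k | k. k \<in> {1..m}}"
    using spline_compact_extension[OF assms(1,2)] by blast
  moreover have "knots s \<inter> {\<alpha> 0<..<\<alpha> n} \<union> {\<alpha> 0, \<alpha> n} \<subseteq> \<alpha> ` {0..n}"
    using assms(4) by auto
  hence "knots sb \<subseteq> {\<alpha> 0 - real k | k. k \<in> {1..m}} \<union> \<alpha> ` {0..n} \<union> {\<alpha> n + real k | k. k \<in> {1..m}}"
    by (intro order.trans[OF knots_sb] Un_mono order.refl)
  ultimately show ?thesis by blast
qed

end
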